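(* Let $k$ be a positive integer and let $P=v_1v_2\cdots v_l$ be a path with $l\ge 2k$. Then $P$ has a dispersed $k$-placement $(\phi_1,\dots,\phi_k)$ in $K_l$ such that, for all indices $a,b$ with $|a-b|\ge 2k-1$, the $2k$ vertices $\phi_i(v_a),\phi_j(v_b)$ ($1\le i,j\le k$) are pairwise distinct.
   Context: For a graph $H$ on $m$ vertices, a $k$-placement of $H$ (in $K_m$) is a $k$-tuple $(\phi_1,\dots,\phi_k)$ of bijections $\phi_i:V(H)\to V(K_m)$ such that the edge sets $\phi_i(E(H))=\{\phi_i(x)\phi_i(y):xy\in E(H)\}$ are pairwise disjoint. A vertex $v$ is $k$-placed if $\phi_i(v)\ne\phi_j(v)$ for all $i\neq j$; the placement is dispersed if every vertex is $k$-placed. *)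

theory Defs
  imports Main
begin

(* The path P = v_1 v_2 ... v_l, with v_a identified with the natural number a;
   vertex set {1..l}, edges v_a v_{a+1}. K_l has vertex set {1..l}. *)
definition path_edges :: "nat \<Rightarrow> nat set set" where
  "path_edges l = {{a, Suc a} | a. 1 \<le> a \<and> Suc a \<le> l}"

definition edge_image :: "(nat \<Rightarrow> nat) \<Rightarrow> nat set set \<Rightarrow> nat set set" where
  "edge_image f E = {{f x, f y} | x y. {x, y} \<in> E}"

definition path_placement :: "nat \<Rightarrow> nat \<Rightarrow> (nat \<Rightarrow> nat \<Rightarrow> nat) \<Rightarrow> bool" where
  "path_placement k l phi \<longleftrightarrow>
     (\<forall>i\<in>{1..k}. bij_betw (phi i) {1..l} {1..l}) \<and>
     (\<forall>i\<in>{1..k}. \<forall>j\<in>{1..k}. i \<noteq> j \<longrightarrow>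
        edge_image (phi i) (path_edges l) \<inter> edge_image (phi j) (path_edges l) = {})"

definition k_placed :: "nat \<Rightarrow> (nat \<Rightarrow> nat \<Rightarrow> nat) \<Rightarrow> nat \<Rightarrow> bool" where
  "k_placed k phi v \<longleftrightarrow> (\<forall>i\<in>{1..k}. \<forall>j\<in>{1..k}. i \<noteq> j \<longrightarrow> phi i v \<noteq> phi j v)"

definition dispersed :: "nat \<Rightarrow> nat \<Rightarrow> (nat \<Rightarrow> nat \<Rightarrow> nat) \<Rightarrow> bool" where
  "dispersed k l phi \<longleftrightarrow> (\<forall>v\<in>{1..l}. k_placed k phi v)"

end

theory Submission imports Defs begin

text \<open>Identify the vertices of \<open>K\<^sub>l\<close> with \<open>\<int>/l\<close>. The walk \<open>0, 1, -1, 2, -2, \<dots>\<close> visits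
  \<open>l\<close> distinct residues and, being a zigzag, each of its steps joins two numbers with sum \<open>0\<close>
  or \<open>1\<close>. The \<open>i\<close>-th copy of the path is this walk shifted by \<open>i\<close>. Distinct shifts separate
  every vertex; the edges of copy \<open>i\<close> have sums \<open>2i\<close> or \<open>2i + 1\<close> modulo \<open>l\<close>, which are
  different for different \<open>i \<le> k\<close> since \<open>2k \<le> l\<close>; and two path vertices at distance at
  least \<open>2k - 1\<close> sit at walk positions between \<open>k\<close> and \<open>l - k\<close> apart, a gap that no
  difference of two shifts (less than \<open>k\<close>) can close modulo \<open>l\<close>.\<close>

definition zigzag :: "nat \<Rightarrow> int" where
  "zigzag r = (if even r then - int (r div 2) else int ((r + 1) div 2))"

lemma inj_zigzag: "inj zigzag"
  by (rule injI) (auto simp: zigzag_def split: if_splits; presburger)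

lemma zigzag_diff_less:
  assumes "r < l" "s < l"
  shows "\<bar>zigzag r - zigzag s\<bar> < int l"
  using assms unfolding zigzag_def by (auto split: if_splits; presburger)

lemma zigzag_Suc_sum: "zigzag r + zigzag (Suc r) \<in> {0, 1}"
  unfolding zigzag_def by auto

lemma zigzag_diff_far:
  assumes "r + (2 * k - 1) \<le> s" "s < l" "1 \<le> k"
  shows "int k \<le> \<bar>zigzag s - zigzag r\<bar> \<and> \<bar>zigzag s - zigzag r\<bar> \<le> int l - int k"
proof -
  obtain p q where "r = 2 * p \<or> r = 2 * p + 1" "s = 2 * q \<or> s = 2 * q + 1"
    by (metis dvd_mult_div_cancel odd_two_times_div_two_succ)
  with assms show ?thesis
    unfolding zigzag_def by (elim disjE) (simp_all, arith+)
qed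

lemma mod_eq_imp_eq_if_abs_diff_less:
  fixes x y l :: int
  assumes "x mod l = y mod l" "\<bar>x - y\<bar> < l"
  shows "x = y"
proof (rule ccontr)
  assume "x \<noteq> y"
  moreover have "l dvd x - y"
    using assms(1) by (simp add: mod_eq_dvd_iff)
  ultimately have "\<bar>l\<bar> \<le> \<bar>x - y\<bar>"
    by (intro dvd_imp_le_int) simp_all
  with assms(2) show False by simp
qed

lemma edge_image_path_edges:
  "edge_image f (path_edges l) = {{f a, f (Suc a)} | a. 1 \<le> a \<and> Suc a \<le> l}"
  unfolding edge_image_def path_edges_def by (auto simp: doubleton_eq_iff)

definition zigzag_placement :: "nat \<Rightarrow> nat \<Rightarrow> nat \<Rightarrow> nat" where
  "zigzag_placement l i a = nat ((int i + zigzag (a - 1)) mod int l) + 1"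

lemma int_zigzag_placement:
  assumes "0 < l"
  shows "int (zigzag_placement l i a) = (int i + zigzag (a - 1)) mod int l + 1"
  using assms unfolding zigzag_placement_def by simp

lemma int_zigzag_placement_mod:
  assumes "0 < l"
  shows "int (zigzag_placement l i a) mod int l = (int i + zigzag (a - 1) + 1) mod int l"
  by (simp add: int_zigzag_placement[OF assms] mod_add_left_eq)

lemma zigzag_placement_eq_iff:
  assumes "0 < l"
  shows "zigzag_placement l i a = zigzag_placement l j b \<longleftrightarrow>
    (int i + zigzag (a - 1)) mod int l = (int j + zigzag (b - 1)) mod int l"
  using int_zigzag_placement[OF assms] by (metis add_right_cancel of_nat_eq_iff)

lemma zigzag_placement_range:
  assumes "0 < l"
  shows "zigzag_placement l i a \<in> {1..l}"
proof -
  have "0 \<le> (int i + zigzag (a - 1)) mod int l" "(int i + zigzag (a - 1)) mod int l < int l"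
    using assms by simp_all
  then show ?thesis
    unfolding zigzag_placement_def by auto
qed

lemma bij_betw_zigzag_placement:
  assumes "0 < l"
  shows "bij_betw (zigzag_placement l i) {1..l} {1..l}"
proof -
  have inj: "inj_on (zigzag_placement l i) {1..l}"
  proof
    fix a b assume ab: "a \<in> {1..l}" "b \<in> {1..l}"
      and "zigzag_placement l i a = zigzag_placement l i b"
    have "a - 1 < l" "b - 1 < l"
      using ab by auto
    have "int i + zigzag (a - 1) = int i + zigzag (b - 1)"
    proof (rule mod_eq_imp_eq_if_abs_diff_less)
      show "(int i + zigzag (a - 1)) mod int l = (int i + zigzag (b - 1)) mod int l"
        using \<open>zigzag_placement l i a = zigzag_placement l i b\<close>
        by (simp add: zigzag_placement_eq_iff[OF assms])
      show "\<bar>(int i + zigzag (a - 1)) - (int i + zigzag (b - 1))\<bar> < int l"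
        using \<open>a - 1 < l\<close> \<open>b - 1 < l\<close> by (simp add: zigzag_diff_less)
    qed
    then have "zigzag (a - 1) = zigzag (b - 1)"
      by simp
    then have "a - 1 = b - 1"
      by (rule injD[OF inj_zigzag])
    with ab show "a = b"
      by auto
  qed
  moreover have "zigzag_placement l i ` {1..l} \<subseteq> {1..l}"
    using zigzag_placement_range[OF assms] by blast
  ultimately show ?thesis
    by (simp add: bij_betw_def endo_inj_surj)
qed

lemma zigzag_placement_k_placed:
  assumes "k \<le> l" "i \<in> {1..k}" "j \<in> {1..k}"
    and "zigzag_placement l i a = zigzag_placement l j a"
  shows "i = j"
proof -
  have l: "0 < l" using assms by auto
  have "int i + zigzag (a - 1) = int j + zigzag (a - 1)"
  proof (rule mod_eq_imp_eq_if_abs_diff_less)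
    show "(int i + zigzag (a - 1)) mod int l = (int j + zigzag (a - 1)) mod int l"
      using assms(4) by (simp add: zigzag_placement_eq_iff[OF l])
    show "\<bar>(int i + zigzag (a - 1)) - (int j + zigzag (a - 1))\<bar> < int l"
      using assms by auto
  qed
  then show ?thesis by simp
qed

lemma zigzag_placement_far:
  assumes "1 \<le> k" "2 * k \<le> l" "i \<in> {1..k}" "j \<in> {1..k}" "a \<in> {1..l}" "b \<in> {1..l}"
    and far: "a + (2 * k - 1) \<le> b \<or> b + (2 * k - 1) \<le> a"
  shows "zigzag_placement l i a \<noteq> zigzag_placement l j b"
proof
  assume eq: "zigzag_placement l i a = zigzag_placement l j b"
  have l: "0 < l" using assms by simp
  define x y where "x = int i + zigzag (a - 1)" and "y = int j + zigzag (b - 1)"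
  have mod: "x mod int l = y mod int l"
    using eq by (simp add: zigzag_placement_eq_iff[OF l] x_def y_def)
  have "int k \<le> \<bar>zigzag (b - 1) - zigzag (a - 1)\<bar>"
    "\<bar>zigzag (b - 1) - zigzag (a - 1)\<bar> \<le> int l - int k"
    using far assms zigzag_diff_far[of "a - 1" k "b - 1" l] zigzag_diff_far[of "b - 1" k "a - 1" l]
    by (auto simp: abs_minus_commute)
  moreover have "\<bar>int i - int j\<bar> < int k"
    using assms by auto
  ultimately have "\<bar>x - y\<bar> < int l" "x \<noteq> y"
    unfolding x_def y_def by linarith+
  with mod show False
    using mod_eq_imp_eq_if_abs_diff_less by blast
qed

text \<open>Summing the endpoints is the one invariant of an edge that forgets its orientation.\<close>

lemma zigzag_placement_edge_sum:
  assumes "0 < l" "1 \<le> a"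
  obtains e where "e \<in> {0, 1}"
    "(int (zigzag_placement l i a) + int (zigzag_placement l i (Suc a))) mod int l
       = (2 * int i + 2 + e) mod int l"
proof -
  have "zigzag (a - 1) + zigzag (Suc (a - 1)) \<in> {0, 1}"
    by (rule zigzag_Suc_sum)
  then have e: "zigzag (a - 1) + zigzag a \<in> {0, 1}"
    using assms(2) by simp
  have "(int (zigzag_placement l i a) + int (zigzag_placement l i (Suc a))) mod int l
      = (int (zigzag_placement l i a) mod int l + int (zigzag_placement l i (Suc a)) mod int l)
          mod int l"
    by (rule mod_add_eq[symmetric])
  also have "\<dots> = ((int i + zigzag (a - 1) + 1) mod int l + (int i + zigzag a + 1) mod int l)
      mod int l"
    by (simp add: int_zigzag_placement_mod[OF assms(1)])
  also have "\<dots> = ((int i + zigzag (a - 1) + 1) + (int i + zigzag a + 1)) mod int l"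
    by (rule mod_add_eq)
  also have "\<dots> = (2 * int i + 2 + (zigzag (a - 1) + zigzag a)) mod int l"
    by (simp add: algebra_simps)
  finally show ?thesis
    by (rule that[OF e])
qed

lemma zigzag_placement_edges_disjoint:
  assumes "2 * k \<le> l" "i \<in> {1..k}" "j \<in> {1..k}" "i \<noteq> j"
  shows "edge_image (zigzag_placement l i) (path_edges l)
       \<inter> edge_image (zigzag_placement l j) (path_edges l) = {}"
proof (rule ccontr)
  let ?\<phi> = "zigzag_placement l"
  assume "\<not> ?thesis"
  then obtain a b where ab: "1 \<le> a" "1 \<le> b"
    and eq: "{?\<phi> i a, ?\<phi> i (Suc a)} = {?\<phi> j b, ?\<phi> j (Suc b)}"
    unfolding edge_image_path_edges by blast
  have l: "0 < l" using assms by auto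
  from eq have "int (?\<phi> i a) + int (?\<phi> i (Suc a)) = int (?\<phi> j b) + int (?\<phi> j (Suc b))"
    by (auto simp: doubleton_eq_iff)
  moreover obtain e where "e \<in> {0, 1}"
    "(int (?\<phi> i a) + int (?\<phi> i (Suc a))) mod int l = (2 * int i + 2 + e) mod int l"
    using zigzag_placement_edge_sum[OF l ab(1)] .
  moreover obtain e' where "e' \<in> {0, 1}"
    "(int (?\<phi> j b) + int (?\<phi> j (Suc b))) mod int l = (2 * int j + 2 + e') mod int l"
    using zigzag_placement_edge_sum[OF l ab(2)] .
  ultimately have mod: "(2 * int i + 2 + e) mod int l = (2 * int j + 2 + e') mod int l"
    and e: "e \<in> {0, 1}" "e' \<in> {0, 1}"
    by simp_all
  have "\<bar>(2 * int i + 2 + e) - (2 * int j + 2 + e')\<bar> < int l"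
    using assms e by auto
  with mod have "2 * int i + 2 + e = 2 * int j + 2 + e'"
    by (rule mod_eq_imp_eq_if_abs_diff_less)
  with assms(4) e show False by auto
qed

lemma card_zigzag_placement_far:
  assumes "1 \<le> k" "2 * k \<le> l" "a \<in> {1..l}" "b \<in> {1..l}"
    and "a + (2 * k - 1) \<le> b \<or> b + (2 * k - 1) \<le> a"
  shows "card ((\<lambda>i. zigzag_placement l i a) ` {1..k} \<union> (\<lambda>j. zigzag_placement l j b) ` {1..k})
    = 2 * k"
proof -
  have "k \<le> l" using assms by simp
  then have "inj_on (\<lambda>i. zigzag_placement l i c) {1..k}" for c
    using zigzag_placement_k_placed by (intro inj_onI) blast
  moreover have "(\<lambda>i. zigzag_placement l i a) ` {1..k} \<inter> (\<lambda>j. zigzag_placement l j b) ` {1..k} = {}"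
    using zigzag_placement_far[OF assms(1,2) _ _ assms(3-5)] by fastforce
  ultimately show ?thesis
    by (simp add: card_Un_disjoint card_image)
qed

theorem mainTheorem5:
  fixes k l :: nat
  assumes "k \<ge> 1" and "l \<ge> 2 * k"
  shows "\<exists>phi. path_placement k l phi \<and> dispersed k l phi \<and>
    (\<forall>a\<in>{1..l}. \<forall>b\<in>{1..l}. 2 * k - 1 \<le> (if a \<le> b then b - a else a - b) \<longrightarrow>
       card ((\<lambda>i. phi i a) ` {1..k} \<union> (\<lambda>j. phi j b) ` {1..k}) = 2 * k)"
proof (intro exI[of _ "zigzag_placement l"] conjI ballI impI)
  have l: "0 < l" "k \<le> l" using assms by auto
  show "path_placement k l (zigzag_placement l)"
    unfolding path_placement_def
    using bij_betw_zigzag_placement[OF l(1)] zigzag_placement_edges_disjoint[OF assms(2)] by blast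
  show "dispersed k l (zigzag_placement l)"
    unfolding dispersed_def k_placed_def using zigzag_placement_k_placed[OF l(2)] by blast
  fix a b assume ab: "a \<in> {1..l}" "b \<in> {1..l}"
    and "2 * k - 1 \<le> (if a \<le> b then b - a else a - b)"
  then have "a + (2 * k - 1) \<le> b \<or> b + (2 * k - 1) \<le> a"
    by (auto split: if_splits)
  then show "card ((\<lambda>i. zigzag_placement l i a) ` {1..k} \<union> (\<lambda>j. zigzag_placement l j b) ` {1..k})
      = 2 * k"
    using card_zigzag_placement_far[OF assms ab] by blast
qed

end
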